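(* The variety $\mathsf{V}(S_{(4,414)})$ is the ai-semiring variety defined by the identities $xy\approx yx$, $x_1x_2x_3\approx x_1x_2x_3+x_4$, $x_1x_2+x_3x_4\approx x_1x_2+x_3x_4+x_1x_4$.
   Context: An ai-semiring is an algebra $(S,+,\cdot)$ with $(S,+)$ a semilattice, $(S,\cdot)$ a semigroup, and both distributive laws. $\mathsf{V}(S)$ is the variety generated by $S$; "the ai-semiring variety defined by identities $\Sigma$" is the class of all ai-semirings satisfying $\Sigma$. $S_{(4,414)}$ has carrier $\{1,2,3,4\}$; addition: $x+x=x$, $2+x=x$, $1+x=1$ for all $x$, $3+4=1$; multiplication (row $a$, column $b$ gives $a\cdot b$): row $1$: $1,1,1,1$; row $2$: $1,3,1,3$; row $3$: $1,1,1,1$; row $4$: $1,3,1,3$. *)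

theory Defs
  imports Main
begin

datatype trm = Var nat | Pl trm trm | Ml trm trm

text \<open>An algebra of type (+,*) is given by two binary operations on a type 'a
  (the carrier is the whole type).\<close>
fun eval :: "('a \<Rightarrow> 'a \<Rightarrow> 'a) \<Rightarrow> ('a \<Rightarrow> 'a \<Rightarrow> 'a) \<Rightarrow> (nat \<Rightarrow> 'a) \<Rightarrow> trm \<Rightarrow> 'a" where
  "eval pl ml \<rho> (Var n) = \<rho> n"
| "eval pl ml \<rho> (Pl s t) = pl (eval pl ml \<rho> s) (eval pl ml \<rho> t)"
| "eval pl ml \<rho> (Ml s t) = ml (eval pl ml \<rho> s) (eval pl ml \<rho> t)"

definition satisfies :: "('a \<Rightarrow> 'a \<Rightarrow> 'a) \<Rightarrow> ('a \<Rightarrow> 'a \<Rightarrow> 'a) \<Rightarrow> trm \<times> trm \<Rightarrow> bool" where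
  "satisfies pl ml e \<longleftrightarrow> (\<forall>\<rho>. eval pl ml \<rho> (fst e) = eval pl ml \<rho> (snd e))"

definition ai_semiring :: "('a \<Rightarrow> 'a \<Rightarrow> 'a) \<Rightarrow> ('a \<Rightarrow> 'a \<Rightarrow> 'a) \<Rightarrow> bool" where
  "ai_semiring pl ml \<longleftrightarrow>
     (\<forall>x y z. pl (pl x y) z = pl x (pl y z)) \<and>
     (\<forall>x y. pl x y = pl y x) \<and>
     (\<forall>x. pl x x = x) \<and>
     (\<forall>x y z. ml (ml x y) z = ml x (ml y z)) \<and>
     (\<forall>x y z. ml x (pl y z) = pl (ml x y) (ml x z)) \<and>
     (\<forall>x y z. ml (pl x y) z = pl (ml x z) (ml y z))"

datatype s4 = E1 | E2 | E3 | E4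

fun s4_add :: "s4 \<Rightarrow> s4 \<Rightarrow> s4" where
  "s4_add E1 y = E1"
| "s4_add x E1 = E1"
| "s4_add E2 y = y"
| "s4_add x E2 = x"
| "s4_add E3 E3 = E3"
| "s4_add E4 E4 = E4"
| "s4_add E3 E4 = E1"
| "s4_add E4 E3 = E1"

fun s4_mul :: "s4 \<Rightarrow> s4 \<Rightarrow> s4" where
  "s4_mul E2 E2 = E3"
| "s4_mul E2 E4 = E3"
| "s4_mul E4 E2 = E3"
| "s4_mul E4 E4 = E3"
| "s4_mul x y = E1"

text \<open>Membership in the variety V(S) generated by S_(4,414): by Birkhoff's HSP theorem,
  V(S) is the class of algebras satisfying every identity that holds in S.\<close>
definition in_V_S4 :: "('a \<Rightarrow> 'a \<Rightarrow> 'a) \<Rightarrow> ('a \<Rightarrow> 'a \<Rightarrow> 'a) \<Rightarrow> bool" where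
  "in_V_S4 pl ml \<longleftrightarrow> (\<forall>e. satisfies s4_add s4_mul e \<longrightarrow> satisfies pl ml e)"

definition Sigma_414 :: "(trm \<times> trm) set" where
  "Sigma_414 = {
     (Ml (Var 1) (Var 2), Ml (Var 2) (Var 1)),
     (Ml (Ml (Var 1) (Var 2)) (Var 3), Pl (Ml (Ml (Var 1) (Var 2)) (Var 3)) (Var 4)),
     (Pl (Ml (Var 1) (Var 2)) (Ml (Var 3) (Var 4)),
      Pl (Pl (Ml (Var 1) (Var 2)) (Ml (Var 3) (Var 4))) (Ml (Var 1) (Var 4))) }"

end

theory Submission
  imports Defs
begin

(* In every ai-semiring a term equals the sum of its monomials, i.e. of the words in its
  variables. In an ai-semiring satisfying the three identities, multiplication commutes,
  a product of three elements absorbs every element (so all such products coincide), and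
  xp + qy absorbs xy. The value of a term is therefore determined by whether it has a monomial
  of length at least 3 and, if it has none, by its variables occurring as linear monomials
  and its variables occurring in quadratic monomials.
  In S_(4,414) these invariants can be read off from the values of the term under the
  assignment E2 everywhere and its modifications x := E4 and x := E3: the values E2, E3 form a
  subsemilattice, E1 is absorbing, E3 + E4 = E1, and every product of three elements is E1.
  So any identity of S_(4,414) relates terms with equal invariants and holds in every such
  algebra; conversely S_(4,414) is itself such an algebra. *)

fun word_val :: "('a \<Rightarrow> 'a \<Rightarrow> 'a) \<Rightarrow> (nat \<Rightarrow> 'a) \<Rightarrow> nat list \<Rightarrow> 'a" where
  "word_val ml \<rho> [] = undefined"
| "word_val ml \<rho> [x] = \<rho> x"
| "word_val ml \<rho> (x # y # zs) = ml (\<rho> x) (word_val ml \<rho> (y # zs))"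

fun monomials :: "trm \<Rightarrow> nat list set" where
  "monomials (Var n) = {[n]}"
| "monomials (Pl s t) = monomials s \<union> monomials t"
| "monomials (Ml s t) = case_prod (@) ` (monomials s \<times> monomials t)"

lemma finite_monomials: "finite (monomials t)"
  by (induction t) auto

lemma monomials_nonempty: "monomials t \<noteq> {}"
  by (induction t) auto

lemma Nil_notin_monomials: "[] \<notin> monomials t"
  by (induction t) auto

definition has_long_monomial :: "trm \<Rightarrow> bool" where
  "has_long_monomial t \<longleftrightarrow> (\<exists>w\<in>monomials t. 3 \<le> length w)"

definition linear_vars :: "trm \<Rightarrow> nat set" where
  "linear_vars t = {x. [x] \<in> monomials t}"

definition quadratic_vars :: "trm \<Rightarrow> nat set" where
  "quadratic_vars t = {x. \<exists>w\<in>monomials t. length w = 2 \<and> x \<in> set w}"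

lemma short_monomial_cases:
  assumes "\<not> has_long_monomial t" and "w \<in> monomials t"
  obtains x where "w = [x]" | x y where "w = [x, y]"
proof -
  have "w \<noteq> []" "length w < 3"
    using assms Nil_notin_monomials by (auto simp: has_long_monomial_def)
  then show ?thesis using that by (cases w rule: remdups_adj.cases) auto
qed

locale ai_semiring_algebra =
  fixes pl ml :: "'a \<Rightarrow> 'a \<Rightarrow> 'a"
  assumes ai_semiring: "ai_semiring pl ml"
begin

lemma add_assoc: "pl (pl x y) z = pl x (pl y z)"
  and add_commute: "pl x y = pl y x"
  and add_idem: "pl x x = x"
  and mult_assoc: "ml (ml x y) z = ml x (ml y z)"
  and distrib_left: "ml x (pl y z) = pl (ml x y) (ml x z)"
  and distrib_right: "ml (pl x y) z = pl (ml x z) (ml y z)"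
  using ai_semiring unfolding ai_semiring_def by blast+

sublocale join: semilattice_set pl
  by unfold_locales (rule add_assoc, rule add_commute, rule add_idem)

abbreviation le :: "'a \<Rightarrow> 'a \<Rightarrow> bool" (infix "\<preceq>" 50) where
  "a \<preceq> b \<equiv> pl a b = b"

lemma le_trans: "a \<preceq> b \<Longrightarrow> b \<preceq> c \<Longrightarrow> a \<preceq> c"
  by (metis add_assoc)

lemma le_antisym: "a \<preceq> b \<Longrightarrow> b \<preceq> a \<Longrightarrow> a = b"
  by (metis add_commute)

lemma add_le: "a \<preceq> c \<Longrightarrow> b \<preceq> c \<Longrightarrow> pl a b \<preceq> c"
  by (metis add_assoc)

lemma word_val_append:
  "u \<noteq> [] \<Longrightarrow> v \<noteq> [] \<Longrightarrow> word_val ml \<rho> (u @ v) = ml (word_val ml \<rho> u) (word_val ml \<rho> v)"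
proof (induction u)
  case (Cons a u)
  then show ?case by (cases u) (auto simp: mult_assoc neq_Nil_conv)
qed simp

lemma mult_join_left:
  "finite B \<Longrightarrow> B \<noteq> {} \<Longrightarrow> ml a (join.F B) = join.F (ml a ` B)"
  by (rule join.hom_commute) (rule distrib_left)

lemma mult_join:
  assumes "finite A" "A \<noteq> {}" "finite B" "B \<noteq> {}"
  shows "ml (join.F A) (join.F B) = join.F (case_prod ml ` (A \<times> B))"
  using assms(1,2)
proof (induction A rule: finite_ne_induct)
  case (singleton a)
  have "{a} \<times> B = Pair a ` B" by auto
  then show ?case
    using assms(3,4) by (simp add: mult_join_left image_image)
next
  case (insert a A)
  have "ml (join.F (insert a A)) (join.F B) = pl (ml a (join.F B)) (ml (join.F A) (join.F B))"
    using insert.hyps by (simp add: distrib_right)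
  also have "\<dots> = pl (join.F (ml a ` B)) (join.F (case_prod ml ` (A \<times> B)))"
    using insert.IH assms(3,4) by (simp add: mult_join_left)
  also have "\<dots> = join.F (ml a ` B \<union> case_prod ml ` (A \<times> B))"
    using insert.hyps assms(3,4) by (simp add: join.union)
  also have "ml a ` B \<union> case_prod ml ` (A \<times> B) = case_prod ml ` (insert a A \<times> B)"
    by auto
  finally show ?case .
qed

lemma eval_normal_form: "eval pl ml \<rho> t = join.F (word_val ml \<rho> ` monomials t)"
proof (induction t)
  case (Pl s t)
  then show ?case
    by (simp add: image_Un join.union finite_monomials monomials_nonempty)
next
  case (Ml s t)
  let ?val = "word_val ml \<rho>"
  have "?val ` monomials (Ml s t) = case_prod ml ` (?val ` monomials s \<times> ?val ` monomials t)"
    unfolding monomials.simps image_paired_Times[symmetric] image_image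
    by (intro image_cong) (auto intro!: word_val_append simp: Nil_notin_monomials)
  with Ml show ?case
    by (simp add: mult_join finite_monomials monomials_nonempty)
qed simp

lemma monomial_le_eval: "w \<in> monomials t \<Longrightarrow> word_val ml \<rho> w \<preceq> eval pl ml \<rho> t"
  by (simp add: eval_normal_form join.in_idem finite_monomials)

lemma eval_in_closed:
  assumes "\<And>w. w \<in> monomials t \<Longrightarrow> word_val ml \<rho> w \<in> B"
    and "\<And>x y. x \<in> B \<Longrightarrow> y \<in> B \<Longrightarrow> pl x y \<in> B"
  shows "eval pl ml \<rho> t \<in> B"
proof -
  have "join.F A \<in> B" if "finite A" "A \<noteq> {}" "A \<subseteq> B" for A
    using that assms(2) by (induction A rule: finite_ne_induct) auto
  moreover have "word_val ml \<rho> ` monomials t \<subseteq> B"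
    using assms(1) by blast
  ultimately show ?thesis
    by (simp add: eval_normal_form finite_monomials monomials_nonempty)
qed

lemma eval_le:
  "(\<And>w. w \<in> monomials t \<Longrightarrow> word_val ml \<rho> w \<preceq> b) \<Longrightarrow> eval pl ml \<rho> t \<preceq> b"
  using eval_in_closed[where B = "{a. a \<preceq> b}"] add_le by blast

lemma word_val_long:
  assumes "3 \<le> length w"
  obtains a b c where "word_val ml \<rho> w = ml (ml a b) c"
proof -
  obtain x y z r where "w = x # y # z # r"
    using assms by (auto simp: numeral_3_eq_3 Suc_le_length_iff)
  then have "word_val ml \<rho> w = ml (ml (\<rho> x) (\<rho> y)) (word_val ml \<rho> (z # r))"
    by (simp add: mult_assoc)
  then show ?thesis using that by blast
qed

end

definition ai_identities :: "(trm \<times> trm) set" where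
  "ai_identities = {
     (Pl (Pl (Var 0) (Var 1)) (Var 2), Pl (Var 0) (Pl (Var 1) (Var 2))),
     (Pl (Var 0) (Var 1), Pl (Var 1) (Var 0)),
     (Pl (Var 0) (Var 0), Var 0),
     (Ml (Ml (Var 0) (Var 1)) (Var 2), Ml (Var 0) (Ml (Var 1) (Var 2))),
     (Ml (Var 0) (Pl (Var 1) (Var 2)), Pl (Ml (Var 0) (Var 1)) (Ml (Var 0) (Var 2))),
     (Ml (Pl (Var 0) (Var 1)) (Var 2), Pl (Ml (Var 0) (Var 2)) (Ml (Var 1) (Var 2)))}"

lemma ai_semiring_iff_satisfies: "ai_semiring pl ml \<longleftrightarrow> (\<forall>e\<in>ai_identities. satisfies pl ml e)"
proof
  assume "ai_semiring pl ml"
  then interpret ai_semiring_algebra pl ml by (rule ai_semiring_algebra.intro)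
  show "\<forall>e\<in>ai_identities. satisfies pl ml e"
    by (simp add: ai_identities_def satisfies_def join.assoc join.commute join.left_commute
        mult_assoc distrib_left distrib_right)
next
  assume "\<forall>e\<in>ai_identities. satisfies pl ml e"
  then have "\<forall>e\<in>ai_identities.
      eval pl ml (nth [x, y, z]) (fst e) = eval pl ml (nth [x, y, z]) (snd e)" for x y z
    unfolding satisfies_def by blast
  then show "ai_semiring pl ml"
    unfolding ai_semiring_def by (simp (no_asm_use) add: ai_identities_def) blast
qed

locale sigma414_model = ai_semiring_algebra +
  assumes mult_commute: "ml a b = ml b a"
    and triple_product_absorbs: "ml (ml a b) c = pl (ml (ml a b) c) d"
    and mixed_product_below: "pl (ml a b) (ml c d) = pl (pl (ml a b) (ml c d)) (ml a d)"
begin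

lemma triple_products_eq: "ml (ml a b) c = ml (ml a' b') c'"
  by (metis add_commute triple_product_absorbs)

lemma eval_long:
  assumes "has_long_monomial t"
  shows "eval pl ml \<rho> t = ml (ml a b) c"
proof -
  obtain w where w: "w \<in> monomials t" "3 \<le> length w"
    using assms by (auto simp: has_long_monomial_def)
  obtain a' b' c' where val: "word_val ml \<rho> w = ml (ml a' b') c'"
    using word_val_long[OF w(2)] .
  have "word_val ml \<rho> w \<preceq> eval pl ml \<rho> t"
    using w(1) by (rule monomial_le_eval)
  moreover have "eval pl ml \<rho> t \<preceq> word_val ml \<rho> w"
    unfolding val by (metis add_commute triple_product_absorbs)
  ultimately show ?thesis
    using val triple_products_eq le_antisym by metis
qed

lemma product_le_if_factors_le:
  assumes "ml a p \<preceq> s" and "ml q b \<preceq> s"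
  shows "ml a b \<preceq> s"
proof -
  have "ml a b \<preceq> pl (ml a p) (ml q b)"
    using mixed_product_below[of a p q b] by (metis add_commute)
  then show ?thesis
    using add_le[OF assms] by (rule le_trans)
qed

lemma quadratic_var_le_eval:
  assumes "x \<in> quadratic_vars t"
  obtains p where "ml (\<rho> x) (\<rho> p) \<preceq> eval pl ml \<rho> t"
proof -
  obtain y z where yz: "[y, z] \<in> monomials t" "x = y \<or> x = z"
    using assms by (auto simp: quadratic_vars_def numeral_2_eq_2 length_Suc_conv)
  then have le: "ml (\<rho> y) (\<rho> z) \<preceq> eval pl ml \<rho> t"
    using monomial_le_eval by fastforce
  from yz(2) show ?thesis
  proof
    assume "x = y"
    then show ?thesis using le that by blast
  next
    assume "x = z"
    then show ?thesis using le that[of y] by (simp add: mult_commute[of "\<rho> z"])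
  qed
qed

lemma eval_le_if_vars_subset:
  assumes "\<not> has_long_monomial s"
    and "linear_vars s \<subseteq> linear_vars t" and "quadratic_vars s \<subseteq> quadratic_vars t"
  shows "eval pl ml \<rho> s \<preceq> eval pl ml \<rho> t"
proof (rule eval_le)
  fix w
  assume w: "w \<in> monomials s"
  from assms(1) w show "word_val ml \<rho> w \<preceq> eval pl ml \<rho> t"
  proof (cases rule: short_monomial_cases)
    case (1 x)
    then have "[x] \<in> monomials t"
      using assms(2) w by (auto simp: linear_vars_def)
    then show ?thesis
      using 1 monomial_le_eval by fastforce
  next
    case (2 x y)
    then have "x \<in> quadratic_vars s" "y \<in> quadratic_vars s"
      using w unfolding quadratic_vars_def by force+
    then have "x \<in> quadratic_vars t" "y \<in> quadratic_vars t"
      using assms(3) by blast+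
    obtain p where p: "ml (\<rho> x) (\<rho> p) \<preceq> eval pl ml \<rho> t"
      using quadratic_var_le_eval[OF \<open>x \<in> quadratic_vars t\<close>] .
    obtain q where "ml (\<rho> y) (\<rho> q) \<preceq> eval pl ml \<rho> t"
      using quadratic_var_le_eval[OF \<open>y \<in> quadratic_vars t\<close>] .
    then have q: "ml (\<rho> q) (\<rho> y) \<preceq> eval pl ml \<rho> t"
      by (simp add: mult_commute[of "\<rho> y"])
    show ?thesis
      using product_le_if_factors_le[OF p q] 2 by simp
  qed
qed

lemma eval_eq_if_vars_eq:
  assumes "has_long_monomial s \<longleftrightarrow> has_long_monomial t"
    and "\<not> has_long_monomial s \<Longrightarrow>
      linear_vars s = linear_vars t \<and> quadratic_vars s = quadratic_vars t"
  shows "eval pl ml \<rho> s = eval pl ml \<rho> t"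
proof (cases "has_long_monomial s")
  case True
  then show ?thesis
    using assms(1) eval_long by metis
next
  case False
  with assms have "\<not> has_long_monomial t" "linear_vars s = linear_vars t"
    "quadratic_vars s = quadratic_vars t"
    by auto
  with False show ?thesis
    using eval_le_if_vars_subset[of s t \<rho>] eval_le_if_vars_subset[of t s \<rho>]
    by (simp add: le_antisym)
qed

end

lemma sigma414_model_iff:
  "sigma414_model pl ml \<longleftrightarrow> ai_semiring pl ml \<and> (\<forall>e\<in>Sigma_414. satisfies pl ml e)"
proof
  assume "sigma414_model pl ml"
  then interpret sigma414_model pl ml .
  show "ai_semiring pl ml \<and> (\<forall>e\<in>Sigma_414. satisfies pl ml e)"
    by (auto simp: Sigma_414_def satisfies_def ai_semiring
        intro: mult_commute triple_product_absorbs mixed_product_below)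
next
  assume *: "ai_semiring pl ml \<and> (\<forall>e\<in>Sigma_414. satisfies pl ml e)"
  then have "\<forall>e\<in>Sigma_414.
      eval pl ml (nth [d, a, b, c, d]) (fst e) = eval pl ml (nth [d, a, b, c, d]) (snd e)"
    for a b c d
    unfolding satisfies_def by blast
  then show "sigma414_model pl ml"
    using * unfolding sigma414_model_def sigma414_model_axioms_def ai_semiring_algebra_def
    by (simp (no_asm_use) add: Sigma_414_def) blast
qed

lemma all_s4: "(\<forall>x. P x) \<longleftrightarrow> P E1 \<and> P E2 \<and> P E3 \<and> P E4"
  by (metis s4.exhaust)

lemma S_sigma414_model: "sigma414_model s4_add s4_mul"
  unfolding sigma414_model_def sigma414_model_axioms_def ai_semiring_algebra_def ai_semiring_def
  by (simp add: all_s4)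

interpretation S: sigma414_model s4_add s4_mul
  by (rule S_sigma414_model)

lemma S_eval_short:
  assumes "\<not> has_long_monomial t"
    and "\<And>x. [x] \<in> monomials t \<Longrightarrow> \<rho> x \<in> {E2, E3}"
    and "\<And>x y. [x, y] \<in> monomials t \<Longrightarrow> s4_mul (\<rho> x) (\<rho> y) \<in> {E2, E3}"
  shows "eval s4_add s4_mul \<rho> t \<in> {E2, E3}"
proof (rule S.eval_in_closed)
  fix w
  assume w: "w \<in> monomials t"
  show "word_val s4_mul \<rho> w \<in> {E2, E3}"
    using assms(2,3) w by (cases rule: short_monomial_cases[OF assms(1) w]) auto
qed auto

lemma S_has_long_monomial_iff: "has_long_monomial t \<longleftrightarrow> eval s4_add s4_mul (\<lambda>_. E2) t = E1"
proof
  assume "has_long_monomial t"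
  then show "eval s4_add s4_mul (\<lambda>_. E2) t = E1"
    using S.eval_long[of t "\<lambda>_. E2" E1 E1 E1] by simp
next
  assume "eval s4_add s4_mul (\<lambda>_. E2) t = E1"
  then show "has_long_monomial t"
    using S_eval_short[of t "\<lambda>_. E2"] by auto
qed

lemma S_linear_vars_iff:
  assumes "\<not> has_long_monomial t"
  shows "x \<in> linear_vars t \<longleftrightarrow> eval s4_add s4_mul ((\<lambda>_. E2)(x := E4)) t \<notin> {E2, E3}"
    (is "_ \<longleftrightarrow> ?v \<notin> _")
proof
  assume "x \<in> linear_vars t"
  then have "s4_add E4 ?v = ?v"
    using S.monomial_le_eval[of "[x]" t "(\<lambda>_. E2)(x := E4)"] by (simp add: linear_vars_def)
  then show "?v \<notin> {E2, E3}"
    by (cases ?v) auto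
next
  assume "?v \<notin> {E2, E3}"
  moreover have "?v \<in> {E2, E3}" if "x \<notin> linear_vars t"
    using that by (intro S_eval_short[OF assms]) (auto simp: linear_vars_def)
  ultimately show "x \<in> linear_vars t"
    by blast
qed

lemma S_quadratic_vars_iff:
  assumes "\<not> has_long_monomial t"
  shows "x \<in> quadratic_vars t \<longleftrightarrow> eval s4_add s4_mul ((\<lambda>_. E2)(x := E3)) t = E1"
    (is "_ \<longleftrightarrow> ?v = E1")
proof
  assume "x \<in> quadratic_vars t"
  then obtain y z where "[y, z] \<in> monomials t" "x = y \<or> x = z"
    by (auto simp: quadratic_vars_def numeral_2_eq_2 length_Suc_conv)
  then have "s4_add E1 ?v = ?v"
    using S.monomial_le_eval[of "[y, z]" t "(\<lambda>_. E2)(x := E3)"] by auto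
  then show "?v = E1"
    by simp
next
  assume "?v = E1"
  moreover have "?v \<in> {E2, E3}" if "x \<notin> quadratic_vars t"
    using that by (intro S_eval_short[OF assms]) (auto simp: quadratic_vars_def)
  ultimately show "x \<in> quadratic_vars t"
    by auto
qed

context sigma414_model
begin

lemma satisfies_if_S_satisfies:
  assumes "satisfies s4_add s4_mul (s, t)"
  shows "satisfies pl ml (s, t)"
proof -
  have S: "eval s4_add s4_mul \<rho> s = eval s4_add s4_mul \<rho> t" for \<rho>
    using assms by (simp add: satisfies_def)
  have long: "has_long_monomial s \<longleftrightarrow> has_long_monomial t"
    using S by (simp add: S_has_long_monomial_iff)
  have "linear_vars s = linear_vars t \<and> quadratic_vars s = quadratic_vars t"
    if short: "\<not> has_long_monomial s"
  proof -
    have "\<not> has_long_monomial t"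
      using short long by simp
    then show ?thesis
      using short S by (simp add: set_eq_iff S_linear_vars_iff S_quadratic_vars_iff)
  qed
  then show ?thesis
    unfolding satisfies_def using eval_eq_if_vars_eq[OF long] by simp
qed

end

theorem proposition5p5:
  fixes pl ml :: "'a \<Rightarrow> 'a \<Rightarrow> 'a"
  shows "in_V_S4 pl ml \<longleftrightarrow> (ai_semiring pl ml \<and> (\<forall>e\<in>Sigma_414. satisfies pl ml e))"
proof
  assume "in_V_S4 pl ml"
  moreover have "satisfies s4_add s4_mul e" if "e \<in> ai_identities \<union> Sigma_414" for e
    using that S_sigma414_model
    unfolding sigma414_model_iff ai_semiring_iff_satisfies by blast
  ultimately show "ai_semiring pl ml \<and> (\<forall>e\<in>Sigma_414. satisfies pl ml e)"
    unfolding in_V_S4_def ai_semiring_iff_satisfies by blast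
next
  assume "ai_semiring pl ml \<and> (\<forall>e\<in>Sigma_414. satisfies pl ml e)"
  then interpret sigma414_model pl ml
    by (simp add: sigma414_model_iff)
  show "in_V_S4 pl ml"
    unfolding in_V_S4_def by (simp add: split_paired_All satisfies_if_S_satisfies)
qed

end
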